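(* Let $A$ be a real symmetric $n\times n$ matrix with smallest eigenvalue $\bar\lambda$, $a\in\mathbb{R}^n$, $C$ a real $l\times n$ matrix, $c\in\mathbb{R}^l$, $D$ a real $m\times n$ matrix, $d\in\mathbb{R}^m$. Consider the problem $$\inf\{x^T(A-\bar\lambda I_n)x+a^Tx:\ \|x\|^2\le 1,\ \|Cx-c\|^2\le 1,\ Dx-d\le 0\},$$ and assume its feasible set is nonempty. If $$\ker(A-\bar\lambda I_n)\cap\ker(C)\cap\{v\in\mathbb{R}^n: Dv\le 0,\ a^Tv\le 0\}\ne\{0\},$$ then the problem admits a minimizer $x^*$ with $\|x^*\|=1$.
   Context: Vector inequalities such as $Dv\le 0$ are componentwise. $I_n$ is the $n\times n$ identity matrix. *)

theory Defs
  imports "HOL-Analysis.Analysis"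
begin

definition is_eigenvalue :: "real^'n^'n \<Rightarrow> real \<Rightarrow> bool" where
  "is_eigenvalue A \<mu> \<longleftrightarrow> (\<exists>v. v \<noteq> 0 \<and> A *v v = \<mu> *\<^sub>R v)"

definition is_smallest_eigenvalue :: "real^'n^'n \<Rightarrow> real \<Rightarrow> bool" where
  "is_smallest_eigenvalue A lam \<longleftrightarrow>
     is_eigenvalue A lam \<and> (\<forall>\<mu>. is_eigenvalue A \<mu> \<longrightarrow> lam \<le> \<mu>)"

end

theory Submission
  imports Defs
begin

text \<open>A minimizer exists by compactness. A nonzero vector \<open>v\<close> of the cone in the hypothesis
  lies in the kernel of the symmetric matrix \<open>A - lam I\<close> and of \<open>C\<close>, so the quadratic part of
  the objective and \<open>Cx\<close> are constant along \<open>x + t v\<close>, while \<open>a\<^sup>T x\<close> and \<open>Dx\<close> do not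
  increase for \<open>t \<ge> 0\<close>. Moving a minimizer along \<open>v\<close> until it reaches the unit sphere
  therefore yields a minimizer of norm 1.\<close>

lemma ray_from_cball_meets_sphere:
  fixes x v :: "'a::real_normed_vector"
  assumes "norm x \<le> r" and "v \<noteq> 0"
  obtains t where "t \<ge> 0" and "norm (x + t *\<^sub>R v) = r"
proof -
  define T where "T = (r + norm x) / norm v"
  have "0 \<le> r + norm x"
    using assms(1) norm_ge_zero[of x] by linarith
  then have "T \<ge> 0" and "norm (T *\<^sub>R v) = r + norm x"
    using assms(2) unfolding T_def by simp_all
  moreover have "norm (T *\<^sub>R v) \<le> norm (x + T *\<^sub>R v) + norm x"
    by (metis add_diff_cancel_left' norm_triangle_ineq4 add.commute)
  ultimately have "r \<le> norm (x + T *\<^sub>R v)"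
    by linarith
  moreover have "continuous_on {0..T} (\<lambda>t. norm (x + t *\<^sub>R v))"
    by (intro continuous_intros)
  ultimately show ?thesis
    using IVT'[of "\<lambda>t. norm (x + t *\<^sub>R v)" 0 r T] assms(1) \<open>T \<ge> 0\<close> that by auto
qed

lemma symmetric_quadratic_form_translate_kernel:
  fixes B :: "real^'n^'n"
  assumes "transpose B = B" and "B *v v = 0"
  shows "(x + t *\<^sub>R v) \<bullet> (B *v (x + t *\<^sub>R v)) = x \<bullet> (B *v x)"
proof -
  have "v \<bullet> (B *v x) = (B *v v) \<bullet> x"
    by (metis assms(1) dot_lmul_matrix vector_transpose_matrix)
  then show ?thesis
    using assms(2)
    by (simp add: matrix_vector_right_distrib matrix_vector_mult_scaleR inner_add_left inner_add_right)
qed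

lemma compact_feasible_set:
  fixes C :: "real^'n^'l" and D :: "real^'n^'m"
  shows "compact {x. norm x ^ 2 \<le> 1 \<and> norm (C *v x - c) ^ 2 \<le> 1 \<and> (\<forall>i. (D *v x - d) $ i \<le> 0)}"
    (is "compact ?F")
proof -
  have "?F = cball 0 1 \<inter> {x. norm (C *v x - c) ^ 2 \<le> 1} \<inter> (\<Inter>i. {x. (D *v x - d) $ i \<le> 0})"
    by (auto simp: power_le_one_iff)
  moreover have "closed {x. norm (C *v x - c) ^ 2 \<le> 1}"
    by (intro closed_Collect_le continuous_intros linear_continuous_on matrix_vector_mul_linear)
  moreover have "closed {x. (D *v x - d) $ i \<le> 0}" for i
    by (intro closed_Collect_le continuous_intros linear_continuous_on matrix_vector_mul_linear)
  ultimately show ?thesis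
    by (auto intro!: compact_Int_closed closed_Int closed_INT)
qed

lemma feasible_descent_along_recession_direction:
  fixes B :: "real^'n^'n" and a :: "real^'n"
    and C :: "real^'n^'l" and c :: "real^'l"
    and D :: "real^'n^'m" and d :: "real^'m"
  defines "f \<equiv> (\<lambda>x. x \<bullet> (B *v x) + a \<bullet> x)"
    and "F \<equiv> {x. norm x ^ 2 \<le> 1 \<and> norm (C *v x - c) ^ 2 \<le> 1 \<and> (\<forall>i. (D *v x - d) $ i \<le> 0)}"
  assumes "transpose B = B"
    and v: "B *v v = 0" "C *v v = 0" "\<forall>i. (D *v v) $ i \<le> 0" "a \<bullet> v \<le> 0"
    and "x \<in> F" and "t \<ge> 0" and "norm (x + t *\<^sub>R v) \<le> 1"
  shows "x + t *\<^sub>R v \<in> F" and "f (x + t *\<^sub>R v) \<le> f x"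
proof -
  have "C *v (x + t *\<^sub>R v) = C *v x"
    using v(2) by (simp add: matrix_vector_right_distrib matrix_vector_mult_scaleR)
  moreover have "(D *v (x + t *\<^sub>R v) - d) $ i \<le> (D *v x - d) $ i" for i
    using v(3) \<open>t \<ge> 0\<close>
    by (simp add: matrix_vector_right_distrib matrix_vector_mult_scaleR mult_nonneg_nonpos)
  ultimately show "x + t *\<^sub>R v \<in> F"
    using \<open>x \<in> F\<close> \<open>norm (x + t *\<^sub>R v) \<le> 1\<close> unfolding F_def
    by (force intro: order_trans simp: power_le_one)
  have "a \<bullet> (x + t *\<^sub>R v) \<le> a \<bullet> x"
    using v(4) \<open>t \<ge> 0\<close> by (simp add: inner_add_right mult_nonneg_nonpos)
  then show "f (x + t *\<^sub>R v) \<le> f x"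
    unfolding f_def using symmetric_quadratic_form_translate_kernel[OF \<open>transpose B = B\<close> v(1)]
    by simp
qed

theorem corollary3p4:
  fixes A :: "real^'n^'n" and a :: "real^'n"
    and C :: "real^'n^'l" and c :: "real^'l"
    and D :: "real^'n^'m" and d :: "real^'m"
    and lam :: real
  defines "f \<equiv> (\<lambda>x. x \<bullet> ((A - lam *\<^sub>R mat 1) *v x) + a \<bullet> x)"
    and "F \<equiv> {x. norm x ^ 2 \<le> 1 \<and> norm (C *v x - c) ^ 2 \<le> 1 \<and> (\<forall>i. (D *v x - d) $ i \<le> 0)}"
  assumes symA: "transpose A = A"
    and lam: "is_smallest_eigenvalue A lam"
    and nonempty: "F \<noteq> {}"
    and cone: "{v. (A - lam *\<^sub>R mat 1) *v v = 0} \<inter> {v. C *v v = 0}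
               \<inter> {v. (\<forall>i. (D *v v) $ i \<le> 0) \<and> a \<bullet> v \<le> 0} \<noteq> {0}"
  shows "\<exists>xs\<in>F. (\<forall>x\<in>F. f xs \<le> f x) \<and> norm xs = 1"
proof -
  have "continuous_on F f"
    unfolding f_def by (intro continuous_intros linear_continuous_on matrix_vector_mul_linear)
  then obtain x0 where "x0 \<in> F" and x0_min: "\<forall>x\<in>F. f x0 \<le> f x"
    using continuous_attains_inf[OF _ nonempty] compact_feasible_set unfolding F_def by blast
  obtain v where v: "(A - lam *\<^sub>R mat 1) *v v = 0" "C *v v = 0"
      "\<forall>i. (D *v v) $ i \<le> 0" "a \<bullet> v \<le> 0" "v \<noteq> 0"
    using cone by (force simp: set_eq_iff)
  have "norm x0 \<le> 1"
    using \<open>x0 \<in> F\<close> unfolding F_def by (simp add: power_le_one_iff)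
  then obtain t where "t \<ge> 0" and unit: "norm (x0 + t *\<^sub>R v) = 1"
    using ray_from_cball_meets_sphere v(5) by blast
  have "transpose (A - lam *\<^sub>R mat 1) = A - lam *\<^sub>R mat 1"
    using symA by (simp add: transpose_def mat_def vec_eq_iff)
  from feasible_descent_along_recession_direction[OF this v(1-4) _ \<open>t \<ge> 0\<close>, where c = c and d = d]
  have "x0 + t *\<^sub>R v \<in> F" and "f (x0 + t *\<^sub>R v) \<le> f x0"
    using \<open>x0 \<in> F\<close> unit unfolding f_def F_def by auto
  then show ?thesis
    using x0_min unit by (meson order_trans)
qed

end
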